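(* Let $a,b,g,h>0$ with $g>a+b+h$. Then the Minkowskian planar 4R linkage with these link lengths is of superrocker–crank type.
   Context: Link lengths: $a$ input crank, $b$ output crank, $g$ ground (fixed link), $h$ coupler. Put $T_1=g+b-h-a$, $T_2=a-g+b-h$, $T_3=g-a-b-h$, $T_4=g-a+b+h$, $T_5=a-h+g+b$. The input crank is a crank if $T_1T_2\ge0$ and $T_3T_4\le0$, a rocker if $T_1T_2<0$ and $T_3T_4\le0$, and a superrocker if $T_1T_2<0$ and $T_3T_4>0$. The output crank is a crank if $T_1\ge0$ and $T_4T_5\ge0$, a rocker if $T_1<0$ and $T_4T_5\ge0$, and a superrocker if $T_1<0$ and $T_4T_5<0$. The linkage is of type "X–Y" if its input crank is of type X and its output crank of type Y. *)

theory Defs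
  imports Complex_Main
begin

datatype link_type = Crank | Rocker | Superrocker

definition T1 :: "real \<Rightarrow> real \<Rightarrow> real \<Rightarrow> real \<Rightarrow> real" where
  "T1 a b g h = g + b - h - a"
definition T2 :: "real \<Rightarrow> real \<Rightarrow> real \<Rightarrow> real \<Rightarrow> real" where
  "T2 a b g h = a - g + b - h"
definition T3 :: "real \<Rightarrow> real \<Rightarrow> real \<Rightarrow> real \<Rightarrow> real" where
  "T3 a b g h = g - a - b - h"
definition T4 :: "real \<Rightarrow> real \<Rightarrow> real \<Rightarrow> real \<Rightarrow> real" where
  "T4 a b g h = g - a + b + h"
definition T5 :: "real \<Rightarrow> real \<Rightarrow> real \<Rightarrow> real \<Rightarrow> real" where
  "T5 a b g h = a - h + g + b"

text \<open>Type of the input crank (length a); None if no case of the classification applies.\<close>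
definition input_type :: "real \<Rightarrow> real \<Rightarrow> real \<Rightarrow> real \<Rightarrow> link_type option" where
  "input_type a b g h =
    (if T1 a b g h * T2 a b g h \<ge> 0 \<and> T3 a b g h * T4 a b g h \<le> 0 then Some Crank
     else if T1 a b g h * T2 a b g h < 0 \<and> T3 a b g h * T4 a b g h \<le> 0 then Some Rocker
     else if T1 a b g h * T2 a b g h < 0 \<and> T3 a b g h * T4 a b g h > 0 then Some Superrocker
     else None)"

text \<open>Type of the output crank (length b).\<close>
definition output_type :: "real \<Rightarrow> real \<Rightarrow> real \<Rightarrow> real \<Rightarrow> link_type option" where
  "output_type a b g h =
    (if T1 a b g h \<ge> 0 \<and> T4 a b g h * T5 a b g h \<ge> 0 then Some Crank
     else if T1 a b g h < 0 \<and> T4 a b g h * T5 a b g h \<ge> 0 then Some Rocker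
     else if T1 a b g h < 0 \<and> T4 a b g h * T5 a b g h < 0 then Some Superrocker
     else None)"

definition linkage_of_type :: "real \<Rightarrow> real \<Rightarrow> real \<Rightarrow> real \<Rightarrow> link_type \<Rightarrow> link_type \<Rightarrow> bool" where
  "linkage_of_type a b g h X Y \<longleftrightarrow> input_type a b g h = Some X \<and> output_type a b g h = Some Y"

end

theory Submission
  imports Defs
begin

text \<open>A ground link longer than the other three together makes \<open>T2\<close> negative and every
  other \<open>T\<close> positive, which selects the superrocker branch for the input crank and the crank
  branch for the output crank.\<close>

lemma input_type_Superrocker:
  assumes "T1 a b g h * T2 a b g h < 0" and "T3 a b g h * T4 a b g h > 0"
  shows "input_type a b g h = Some Superrocker"
  using assms unfolding input_type_def by auto

lemma output_type_Crank:
  assumes "T1 a b g h \<ge> 0" and "T4 a b g h * T5 a b g h \<ge> 0"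
  shows "output_type a b g h = Some Crank"
  using assms unfolding output_type_def by auto

lemma T_signs_long_ground:
  fixes a b g h :: real
  assumes "a > 0" and "b > 0" and "h > 0" and "g > a + b + h"
  shows "T1 a b g h > 0" "T2 a b g h < 0" "T3 a b g h > 0" "T4 a b g h > 0" "T5 a b g h > 0"
  using assms by (simp_all add: T1_def T2_def T3_def T4_def T5_def)

theorem mainTheorem9:
  fixes a b g h :: real
  assumes "a > 0" and "b > 0" and "g > 0" and "h > 0" and "g > a + b + h"
  shows "linkage_of_type a b g h Superrocker Crank"
proof -
  note T = T_signs_long_ground[OF \<open>a > 0\<close> \<open>b > 0\<close> \<open>h > 0\<close> \<open>g > a + b + h\<close>]
  have "input_type a b g h = Some Superrocker"
    by (rule input_type_Superrocker) (simp_all add: T mult_pos_neg)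
  moreover have "output_type a b g h = Some Crank"
    by (rule output_type_Crank) (simp_all add: T less_imp_le)
  ultimately show ?thesis
    unfolding linkage_of_type_def by simp
qed

end
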